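(* Let $\phi$ be a formula in $\mathsf F(\mathrm{LTL}[\mathsf O])$ and $\psi$ a formula in $\mathrm{LTL}[\mathsf X,\mathsf{wX},\mathsf F,\mathsf G]$. If $\phi\equiv_\omega\psi$, then $\psi\equiv_\omega\mathsf F\psi$.
   Context: Let $AP$ be a finite set of atomic propositions and $\Sigma=2^{AP}$. Formulae (negation normal form) are built from literals $p,\neg p$ ($p\in AP$) with $\land,\lor$ and temporal operators. Semantics on infinite traces $\sigma\in\Sigma^\omega$ at positions $i\in\mathbb N$: literals/Booleans as usual; $\mathsf X\phi$ and $\mathsf{wX}\phi$: $\phi$ holds at $i+1$; $\mathsf F\phi$/$\mathsf G\phi$: $\phi$ at some/every $j\ge i$; $\mathsf O\phi$: $\phi$ at some $0\le j\le i$. $\mathcal L^\omega(\phi)=\{\sigma\in\Sigma^\omega:\sigma,0\models\phi\}$; $\phi\equiv_\omega\psi$ iff $\mathcal L^\omega(\phi)=\mathcal L^\omega(\psi)$. $\mathrm{LTL}[S]$: formulae whose temporal operators lie in $S$; $\mathsf F(\mathrm{LTL}[\mathsf O])$: formulae $\mathsf F(\alpha)$ with $\alpha\in\mathrm{LTL}[\mathsf O]$. *)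

theory Defs
  imports Main
begin

text \<open>LTL formulae in negation normal form over atomic propositions of type 'ap.
  Traces are infinite words w :: nat \<Rightarrow> 'ap set (letters in 2^AP).\<close>

datatype 'ap ltl =
    Prop 'ap
  | NProp 'ap
  | And "'ap ltl" "'ap ltl"
  | Or "'ap ltl" "'ap ltl"
  | Next "'ap ltl"
  | WNext "'ap ltl"
  | Eventually "'ap ltl"
  | Globally "'ap ltl"
  | Once "'ap ltl"

fun sat :: "(nat \<Rightarrow> 'ap set) \<Rightarrow> nat \<Rightarrow> 'ap ltl \<Rightarrow> bool" where
  "sat w i (Prop p) = (p \<in> w i)"
| "sat w i (NProp p) = (p \<notin> w i)"
| "sat w i (And a b) = (sat w i a \<and> sat w i b)"
| "sat w i (Or a b) = (sat w i a \<or> sat w i b)"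
| "sat w i (Next a) = sat w (Suc i) a"
| "sat w i (WNext a) = sat w (Suc i) a"
| "sat w i (Eventually a) = (\<exists>j\<ge>i. sat w j a)"
| "sat w i (Globally a) = (\<forall>j\<ge>i. sat w j a)"
| "sat w i (Once a) = (\<exists>j\<le>i. sat w j a)"

definition lang_omega :: "'ap ltl \<Rightarrow> (nat \<Rightarrow> 'ap set) set" where
  "lang_omega \<phi> = {w. sat w 0 \<phi>}"

definition equiv_omega :: "'ap ltl \<Rightarrow> 'ap ltl \<Rightarrow> bool" where
  "equiv_omega \<phi> \<psi> \<longleftrightarrow> lang_omega \<phi> = lang_omega \<psi>"

datatype op = OpX | OpWX | OpF | OpG | OpO

fun in_frag :: "op set \<Rightarrow> 'ap ltl \<Rightarrow> bool" where
  "in_frag S (Prop p) = True"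
| "in_frag S (NProp p) = True"
| "in_frag S (And a b) = (in_frag S a \<and> in_frag S b)"
| "in_frag S (Or a b) = (in_frag S a \<and> in_frag S b)"
| "in_frag S (Next a) = (OpX \<in> S \<and> in_frag S a)"
| "in_frag S (WNext a) = (OpWX \<in> S \<and> in_frag S a)"
| "in_frag S (Eventually a) = (OpF \<in> S \<and> in_frag S a)"
| "in_frag S (Globally a) = (OpG \<in> S \<and> in_frag S a)"
| "in_frag S (Once a) = (OpO \<in> S \<and> in_frag S a)"

definition in_F_LTL_O :: "'ap ltl \<Rightarrow> bool" where
  "in_F_LTL_O \<phi> \<longleftrightarrow> (\<exists>\<alpha>. \<phi> = Eventually \<alpha> \<and> in_frag {OpO} \<alpha>)"

end

theory Submission
  imports Defs "HOL-Library.Omega_Words_Fun"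
begin

text \<open>Passing from a suffix back to the whole word can only make a formula in negation normal
  form true, never false: future operators see the same positions, and Once sees more of them.
  For formulas without Once the two sides agree. Hence if \<open>\<psi>\<close> holds at position \<open>j\<close>, the
  suffix from \<open>j\<close> satisfies \<open>\<psi>\<close>, hence \<open>\<phi> = F \<alpha>\<close>, hence so does the whole word, hence
  \<open>\<psi>\<close> holds initially.\<close>

lemma sat_suffix_imp: "sat (suffix j w) i a \<Longrightarrow> sat w (j + i) a"
proof (induction a arbitrary: i)
  case (Eventually a)
  then obtain k where "k \<ge> i" "sat w (j + k) a" by auto
  then show ?case by (auto intro!: exI[of _ "j + k"])
next
  case (Globally a)
  have "sat w m a" if "m \<ge> j + i" for m
    using Globally.IH[of "m - j"] Globally.prems that by simp
  then show ?case by simp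
next
  case (Once a)
  then obtain k where "k \<le> i" "sat w (j + k) a" by auto
  then show ?case by (auto intro!: exI[of _ "j + k"])
next
  case (Next a)
  then show ?case using Next.IH[of "Suc i"] by simp
next
  case (WNext a)
  then show ?case using WNext.IH[of "Suc i"] by simp
qed auto

lemma sat_imp_suffix_no_Once:
  assumes "in_frag S a" and "OpO \<notin> S" and "sat w (j + i) a"
  shows "sat (suffix j w) i a"
  using assms
proof (induction a arbitrary: i)
  case (Eventually a)
  then obtain m where "m \<ge> j + i" "sat w m a" by auto
  then show ?case using Eventually.IH[of "m - j"] Eventually.prems(1,2)
    by (auto intro!: exI[of _ "m - j"])
qed auto

lemma sat_suffix_no_Once:
  "in_frag S a \<Longrightarrow> OpO \<notin> S \<Longrightarrow> sat (suffix j w) i a = sat w (j + i) a"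
  using sat_suffix_imp sat_imp_suffix_no_Once by blast

theorem lemma18:
  fixes \<phi> \<psi> :: "'ap ltl"
  assumes "finite (UNIV :: 'ap set)"
    and "in_F_LTL_O \<phi>"
    and "in_frag {OpX, OpWX, OpF, OpG} \<psi>"
    and "equiv_omega \<phi> \<psi>"
  shows "equiv_omega \<psi> (Eventually \<psi>)"
proof -
  obtain \<alpha> where \<phi>: "\<phi> = Eventually \<alpha>"
    using assms(2) unfolding in_F_LTL_O_def by blast
  have \<phi>_iff_\<psi>: "sat w 0 \<phi> \<longleftrightarrow> sat w 0 \<psi>" for w
    using assms(4) unfolding equiv_omega_def lang_omega_def by blast
  have "sat w 0 \<psi>" if "sat w j \<psi>" for w j
  proof -
    have "sat (suffix j w) 0 \<psi>"
      using sat_suffix_no_Once[OF assms(3)] that by simp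
    then obtain i where "sat (suffix j w) i \<alpha>"
      using \<phi>_iff_\<psi> \<phi> by auto
    then have "sat w 0 \<phi>"
      using sat_suffix_imp \<phi> by fastforce
    then show ?thesis
      using \<phi>_iff_\<psi> by blast
  qed
  then show ?thesis
    unfolding equiv_omega_def lang_omega_def by auto
qed

end
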